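(* Consider the storage arbitrage model and Algorithm 1 described in the context. For each period $i$, the optimal reservation $M_i^*$ produced by Algorithm 1 depends solely on those $M_j^*$ with $M_j^*<M_i^*$; that is, the exact values of the $M_j^*$ with $M_j^*\ge M_i^*$ are not needed to determine $M_i^*$.
   Context: Time-of-Use (ToU) setting: a day is divided into periods $1,\dots,n$ with electricity price $\pi_i$ in period $i$, and $\pi_n=\min_i \pi_i$. The user has random demand $X_i$ in period $i$; the $X_i$ are independent, inelastic, and $X_i$ has a continuously differentiable density $f_i$ with $f_i(x)>0$ iff $x\ge 0$. The user owns a lossless, perfectly efficient storage of capacity $C$; $r_i$ is the energy stored at the end of period $i$, $r_0=r_n=C$, the purchase in period $i$ is $u_i=r_i+X_i-r_{i-1}\ge0$, and the expected total cost is $J=\mathbb{E}\big[\sum_{i=1}^n \pi_i(r_i+X_i-r_{i-1})\big]$. A virtual-reservation policy is a sequence $M_1,\dots,M_n$ fixed in advance (possibly exceeding $C$); at the end of period $i$ the user keeps at least $N_i=\min\{M_i,C\}$ in storage, i.e. $r_i=\max\{N_i, r_{i-1}-X_i\}$, buying from the grid only when needed; the last period's reservation fully charges the storage. $J_i(M_i):=J_i(M_i\mid M_{i+1}^*,\dots,M_n^* )$ is the expected cost over periods $i+1,\dots,n$ when reserving $M_i$ at the end of period $i$ and $M_{i+1}^*,\dots,M_n^*$ afterward. Algorithm 1 computes the $M_i^*$ backward, starting from the boundary condition that the last period's reservation is $C$ and treating the capacity as large enough that the computed reservations are not truncated: given $M_{i+1}^*,\dots,M_n^*$, if $\pi_i\ge\pi_{i+1}$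 it returns $M_i^*=0$; otherwise it returns the (unique) $M_i$ solving $\pi_i=-\frac{\mathrm{d}J_i}{\mathrm{d}M_i}$, equivalently $\pi_i=\sum_{k=i+1}^n \pi_k P_k^i(M_i)$, where $P_k^i(M_i)$ is the probability that, reserving $M_i,M_{i+1}^*,\dots,M_n^*$, period $k$ is the first period after $i$ in which the user must buy energy to charge the storage. *)

theory Defs
  imports "HOL-Probability.Probability"
begin

text \<open>Storage level at the end of period i+d, when reserving m at the end of period i
  and the reservations Mv (i+1), Mv (i+2), ... afterwards (capacity large, no truncation):
  r_i = m,  r_j = max (M_j) (r_{j-1} - X_j).\<close>
fun traj :: "(nat \<Rightarrow> real) \<Rightarrow> (nat \<Rightarrow> 'a \<Rightarrow> real) \<Rightarrow> nat \<Rightarrow> real \<Rightarrow> nat \<Rightarrow> 'a \<Rightarrow> real" where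
  "traj Mv X i m 0 \<omega> = m"
| "traj Mv X i m (Suc d) \<omega> = max (Mv (i + Suc d)) (traj Mv X i m d \<omega> - X (i + Suc d) \<omega>)"

definition purchase :: "(nat \<Rightarrow> real) \<Rightarrow> (nat \<Rightarrow> 'a \<Rightarrow> real) \<Rightarrow> nat \<Rightarrow> real \<Rightarrow> nat \<Rightarrow> 'a \<Rightarrow> real" where
  "purchase Mv X i m k \<omega> =
     traj Mv X i m (k - i) \<omega> + X k \<omega> - traj Mv X i m (k - i - 1) \<omega>"

definition first_buy_prob :: "'a measure \<Rightarrow> (nat \<Rightarrow> 'a \<Rightarrow> real) \<Rightarrow> (nat \<Rightarrow> real) \<Rightarrow> nat \<Rightarrow> real \<Rightarrow> nat \<Rightarrow> real" where
  "first_buy_prob M X Mv i m k =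
     measure M {\<omega> \<in> space M. purchase Mv X i m k \<omega> > 0 \<and>
                             (\<forall>j\<in>{i<..<k}. \<not> purchase Mv X i m j \<omega> > 0)}"

text \<open>The characterisation of the output of Algorithm 1 in period i, given the later
  reservations Mv: 0 if pi_i >= pi_(i+1), otherwise the solution of
  pi_i = sum_{k=i+1}^n pi_k P_k^i(m).\<close>
definition alg1_step :: "'a measure \<Rightarrow> (nat \<Rightarrow> 'a \<Rightarrow> real) \<Rightarrow> (nat \<Rightarrow> real) \<Rightarrow> nat \<Rightarrow> nat \<Rightarrow> (nat \<Rightarrow> real) \<Rightarrow> real \<Rightarrow> bool" where
  "alg1_step M X \<pi> n i Mv m =
     (if \<pi> (Suc i) \<le> \<pi> i then m = 0
      else \<pi> i = (\<Sum>k\<in>{Suc i..n}. \<pi> k * first_buy_prob M X Mv i m k))"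

end

theory Submission
  imports Defs
begin

text \<open>As long as nothing is bought after period \<open>i\<close>, the storage level is \<open>m\<close> minus the
  cumulative demand since \<open>i\<close>. Hence \<open>k\<close> is the first purchase period exactly when \<open>M\<^sub>k\<close> is the
  first reservation exceeding this level. Demands are almost surely positive, so every such level
  is strictly below \<open>m\<close>: a reservation \<open>M\<^sub>j \<ge> m\<close> exceeds it whatever its exact value, and the
  probabilities \<open>P\<^sub>k\<^sup>i(m)\<close> only depend on the reservations below \<open>m\<close>.\<close>

lemma purchase_pos_iff:
  "0 < purchase Mv X i m (i + Suc d) \<omega> \<longleftrightarrow> traj Mv X i m d \<omega> - X (i + Suc d) \<omega> < Mv (i + Suc d)"
  unfolding purchase_def by (simp add: max_def)

lemma greaterThanAtMost_add_Suc: "{i<..i + Suc d} = insert (i + Suc d) {i<..i + d}"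
  by auto

lemma sum_greaterThanAtMost_add_Suc:
  "(\<Sum>j\<in>{i<..i + Suc d}. g j) = (\<Sum>j\<in>{i<..i + d}. g j) + g (i + Suc d)"
  unfolding greaterThanAtMost_add_Suc by (simp add: add.commute)

lemma traj_no_purchase:
  assumes "\<forall>j\<in>{i<..i+d}. \<not> 0 < purchase Mv X i m j \<omega>"
  shows "traj Mv X i m d \<omega> = m - (\<Sum>j\<in>{i<..i+d}. X j \<omega>)"
  using assms
proof (induction d)
  case 0
  then show ?case by simp
next
  case (Suc d)
  have "traj Mv X i m d \<omega> = m - (\<Sum>j\<in>{i<..i+d}. X j \<omega>)"
    using Suc by simp
  moreover have "\<not> 0 < purchase Mv X i m (i + Suc d) \<omega>"
    using Suc.prems by simp
  ultimately show ?case
    unfolding purchase_pos_iff sum_greaterThanAtMost_add_Suc traj.simps by simp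
qed

lemma no_purchase_iff:
  "(\<forall>j\<in>{i<..i+d}. \<not> 0 < purchase Mv X i m j \<omega>) \<longleftrightarrow>
   (\<forall>j\<in>{i<..i+d}. Mv j \<le> m - (\<Sum>l\<in>{i<..j}. X l \<omega>))"
proof (induction d)
  case 0
  then show ?case by simp
next
  case (Suc d)
  have split: "(\<forall>j\<in>{i<..i + Suc d}. P j) \<longleftrightarrow> (\<forall>j\<in>{i<..i+d}. P j) \<and> P (i + Suc d)" for P
    unfolding greaterThanAtMost_add_Suc by blast
  show ?case
  proof (cases "\<forall>j\<in>{i<..i+d}. \<not> 0 < purchase Mv X i m j \<omega>")
    case True
    then have "traj Mv X i m d \<omega> = m - (\<Sum>j\<in>{i<..i+d}. X j \<omega>)"
      by (rule traj_no_purchase)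
    then have "\<not> 0 < purchase Mv X i m (i + Suc d) \<omega> \<longleftrightarrow>
        Mv (i + Suc d) \<le> m - (\<Sum>l\<in>{i<..i + Suc d}. X l \<omega>)"
      unfolding purchase_pos_iff sum_greaterThanAtMost_add_Suc by linarith
    with Suc.IH show ?thesis unfolding split by blast
  next
    case False
    with Suc.IH show ?thesis unfolding split by blast
  qed
qed

text \<open>\<open>m - \<Sum>l\<in>{i<..j}. X l \<omega>\<close> is the storage level at the end of period \<open>j\<close> if nothing
  has been bought since period \<open>i\<close>; a purchase is due at the first \<open>k\<close> whose reservation exceeds it.\<close>
definition first_above_level :: "(nat \<Rightarrow> real) \<Rightarrow> (nat \<Rightarrow> 'a \<Rightarrow> real) \<Rightarrow> nat \<Rightarrow> real \<Rightarrow> nat \<Rightarrow> 'a \<Rightarrow> bool"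
  where "first_above_level Mv X i m k \<omega> \<longleftrightarrow>
    (\<forall>j\<in>{i<..<k}. Mv j \<le> m - (\<Sum>l\<in>{i<..j}. X l \<omega>)) \<and> m - (\<Sum>l\<in>{i<..k}. X l \<omega>) < Mv k"

lemma first_purchase_iff_first_above_level:
  assumes "i < k"
  shows "(0 < purchase Mv X i m k \<omega> \<and> (\<forall>j\<in>{i<..<k}. \<not> 0 < purchase Mv X i m j \<omega>)) \<longleftrightarrow>
    first_above_level Mv X i m k \<omega>"
proof -
  obtain d where k: "k = i + Suc d"
    using assms less_iff_Suc_add by auto
  have before: "{i<..<k} = {i<..i + d}"
    using k by auto
  show ?thesis
  proof (cases "\<forall>j\<in>{i<..i+d}. \<not> 0 < purchase Mv X i m j \<omega>")
    case True
    then have "traj Mv X i m d \<omega> = m - (\<Sum>j\<in>{i<..i+d}. X j \<omega>)"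
      by (rule traj_no_purchase)
    then have "0 < purchase Mv X i m k \<omega> \<longleftrightarrow> m - (\<Sum>l\<in>{i<..k}. X l \<omega>) < Mv k"
      unfolding k purchase_pos_iff sum_greaterThanAtMost_add_Suc by linarith
    with True show ?thesis
      unfolding first_above_level_def before no_purchase_iff by blast
  next
    case False
    then show ?thesis
      unfolding first_above_level_def before no_purchase_iff by blast
  qed
qed

lemma first_buy_prob_eq_measure_first_above_level:
  assumes "i < k"
  shows "first_buy_prob M X Mv i m k = measure M {\<omega> \<in> space M. first_above_level Mv X i m k \<omega>}"
  unfolding first_buy_prob_def first_purchase_iff_first_above_level[OF assms] ..

lemma first_above_level_sets:
  assumes "\<forall>l\<in>{i<..k}. X l \<in> borel_measurable M"
  shows "{\<omega> \<in> space M. first_above_level Mv X i m k \<omega>} \<in> sets M"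
proof -
  have [measurable]: "X l \<in> borel_measurable M" if "l \<in> {i<..k}" for l
    using assms that by blast
  have level_le: "Measurable.pred M (\<lambda>\<omega>. Mv j \<le> m - (\<Sum>l\<in>{i<..j}. X l \<omega>))"
    and level_less: "Measurable.pred M (\<lambda>\<omega>. m - (\<Sum>l\<in>{i<..j}. X l \<omega>) < Mv j)"
    if "j \<le> k" for j
  proof -
    have "(\<lambda>\<omega>. \<Sum>l\<in>{i<..j}. X l \<omega>) \<in> borel_measurable M"
      using that by (intro borel_measurable_sum) auto
    then show "Measurable.pred M (\<lambda>\<omega>. Mv j \<le> m - (\<Sum>l\<in>{i<..j}. X l \<omega>))"
      and "Measurable.pred M (\<lambda>\<omega>. m - (\<Sum>l\<in>{i<..j}. X l \<omega>) < Mv j)"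
      by measurable
  qed
  have "Measurable.pred M (first_above_level Mv X i m k)"
    unfolding first_above_level_def
    by (intro pred_intros_logic pred_intros_finite level_le level_less) auto
  then show ?thesis
    by (simp add: pred_def)
qed

lemma first_above_level_cong:
  assumes "i < k"
    and pos: "\<forall>l\<in>{i<..k}. 0 < X l \<omega>"
    and below: "\<forall>j\<in>{i<..k}. Mv1 j < m \<longleftrightarrow> Mv2 j < m"
    and agree: "\<forall>j\<in>{i<..k}. Mv1 j < m \<longrightarrow> Mv1 j = Mv2 j"
  shows "first_above_level Mv1 X i m k \<omega> \<longleftrightarrow> first_above_level Mv2 X i m k \<omega>"
proof -
  have le_iff: "Mv1 j \<le> m - (\<Sum>l\<in>{i<..j}. X l \<omega>) \<longleftrightarrow> Mv2 j \<le> m - (\<Sum>l\<in>{i<..j}. X l \<omega>)"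
    if j: "j \<in> {i<..k}" for j
  proof -
    have "0 < (\<Sum>l\<in>{i<..j}. X l \<omega>)"
      using j pos by (intro sum_pos) auto
    with j below agree show ?thesis
      by (cases "Mv1 j < m") auto
  qed
  have "k \<in> {i<..k}"
    using \<open>i < k\<close> by simp
  then show ?thesis
    unfolding first_above_level_def using le_iff by (auto simp: not_le[symmetric])
qed

lemma first_buy_prob_cong:
  assumes "i < k"
    and meas: "\<forall>l\<in>{i<..k}. X l \<in> borel_measurable M"
    and pos: "AE \<omega> in M. \<forall>l\<in>{i<..k}. 0 < X l \<omega>"
    and below: "\<forall>j\<in>{i<..k}. Mv1 j < m \<longleftrightarrow> Mv2 j < m"
    and agree: "\<forall>j\<in>{i<..k}. Mv1 j < m \<longrightarrow> Mv1 j = Mv2 j"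
  shows "first_buy_prob M X Mv1 i m k = first_buy_prob M X Mv2 i m k"
proof -
  have "AE \<omega> in M. first_above_level Mv1 X i m k \<omega> \<longleftrightarrow> first_above_level Mv2 X i m k \<omega>"
    using pos by eventually_elim (rule first_above_level_cong[OF \<open>i < k\<close> _ below agree])
  then have "measure M {\<omega> \<in> space M. first_above_level Mv1 X i m k \<omega>} =
      measure M {\<omega> \<in> space M. first_above_level Mv2 X i m k \<omega>}"
    by (intro measure_eq_AE first_above_level_sets meas) auto
  then show ?thesis
    unfolding first_buy_prob_eq_measure_first_above_level[OF \<open>i < k\<close>] .
qed

lemma (in prob_space) AE_pos_if_density_supported_nonneg:
  fixes Y :: "'a \<Rightarrow> real" and g :: "real \<Rightarrow> real"
  assumes "distributed M lborel Y (\<lambda>x. ennreal (g x))"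
    and "\<forall>x. 0 < g x \<longrightarrow> 0 \<le> x"
  shows "AE \<omega> in M. 0 < Y \<omega>"
proof -
  have "AE x in lborel. 0 < ennreal (g x) \<longrightarrow> 0 < x"
    using AE_lborel_singleton[of 0]
  proof eventually_elim
    fix x :: real
    assume "x \<noteq> 0"
    with assms(2) show "0 < ennreal (g x) \<longrightarrow> 0 < x"
      by force
  qed
  then show ?thesis
    by (subst distributed_AE2[OF assms(1)]) auto
qed

theorem lemma3:
  fixes M :: "'a measure" and X :: "nat \<Rightarrow> 'a \<Rightarrow> real" and f :: "nat \<Rightarrow> real \<Rightarrow> real"
    and \<pi> :: "nat \<Rightarrow> real" and n i :: nat and C m :: real and Mv1 Mv2 :: "nat \<Rightarrow> real"
  assumes "prob_space M"
    and "\<forall>k\<in>{1..n}. \<pi> n \<le> \<pi> k"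
    and "prob_space.indep_vars M (\<lambda>_. borel) X {1..n}"
    and "\<forall>k\<in>{1..n}. distributed M lborel (X k) (\<lambda>x. ennreal (f k x))"
    and "\<forall>k\<in>{1..n}. \<forall>x. f k x > 0 \<longleftrightarrow> x \<ge> 0"
    and "\<forall>k\<in>{1..n}. \<exists>f'. (\<forall>x\<ge>0. (f k has_real_derivative f' x) (at x within {0..}))
                          \<and> continuous_on {0..} f'"
    and "C \<ge> 0"
    and "1 \<le> i" and "i < n"
    and "Mv1 n = C" and "Mv2 n = C"
    and "\<forall>j\<in>{Suc i..n}. (Mv1 j < m \<longleftrightarrow> Mv2 j < m)"
    and "\<forall>j\<in>{Suc i..n}. Mv1 j < m \<longrightarrow> Mv1 j = Mv2 j"
  shows "alg1_step M X \<pi> n i Mv1 m \<longleftrightarrow> alg1_step M X \<pi> n i Mv2 m"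
proof -
  \<comment> \<open>Only the support of the densities matters.\<close>
  interpret prob_space M by fact
  have meas: "\<forall>l\<in>{i<..n}. X l \<in> borel_measurable M"
    using assms(4) \<open>1 \<le> i\<close> by (auto simp: distributed_def)
  have "AE \<omega> in M. 0 < X l \<omega>" if "l \<in> {i<..n}" for l
    using that assms(4,5) \<open>1 \<le> i\<close> by (intro AE_pos_if_density_supported_nonneg) auto
  then have pos: "AE \<omega> in M. \<forall>l\<in>{i<..n}. 0 < X l \<omega>"
    by (intro AE_finite_allI) auto
  have "first_buy_prob M X Mv1 i m k = first_buy_prob M X Mv2 i m k" if k: "k \<in> {Suc i..n}" for k
  proof (rule first_buy_prob_cong)
    show "i < k" using k by simp
    have "{i<..k} \<subseteq> {i<..n}" using k by auto
    then show "\<forall>l\<in>{i<..k}. X l \<in> borel_measurable M"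
      and "AE \<omega> in M. \<forall>l\<in>{i<..k}. 0 < X l \<omega>"
      and "\<forall>j\<in>{i<..k}. Mv1 j < m \<longleftrightarrow> Mv2 j < m"
      and "\<forall>j\<in>{i<..k}. Mv1 j < m \<longrightarrow> Mv1 j = Mv2 j"
      using meas pos assms(12,13) by auto
  qed
  then have "(\<Sum>k\<in>{Suc i..n}. \<pi> k * first_buy_prob M X Mv1 i m k) =
      (\<Sum>k\<in>{Suc i..n}. \<pi> k * first_buy_prob M X Mv2 i m k)"
    by (intro sum.cong) auto
  then show ?thesis
    unfolding alg1_step_def by simp
qed

end
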